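(* Let $G$ be a finite simple graph. Suppose there exists an injective coloring $f$ of $S_G^2$ using exactly $\chi_i(S_G^2)$ colors such that all extreme vertices of $S_G^2$ receive the same color, and for each extreme vertex $(u,u)$, $u\in V(G)$, the color $f(u,u)$ is not assigned to any neighbor of $(u,u)$ in $S_G^2$. Then $\chi_i(S_G^n)=\chi_i(S_G^2)$ for all $n\ge 2$.
   Context: For a graph $H$, an injective $k$-coloring is a map $f:V(H)\to\{1,\dots,k\}$ such that any two distinct vertices $u,w$ with $f(u)=f(w)$ have no common neighbor; $\chi_i(H)$ is the least such $k$. For a graph $G$ and positive integer $n$, the generalized Sierpiński graph $S_G^n$ has vertex set $V(G)^n$, and $(u_1,\dots,u_n)$, $(v_1,\dots,v_n)$ are adjacent if and only if there is $d\in\{1,\dots,n\}$ with $u_i=v_i$ for $i<d$, $u_dv_d\in E(G)$, and $u_i=v_d$, $v_i=u_d$ for all $i>d$. The extreme vertices of $S_G^n$ are the vertices $(u,u,\dots,u)$ with $u\in V(G)$. *)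

theory Defs
  imports Main
begin

definition simple_graph :: "'a set \<Rightarrow> ('a \<Rightarrow> 'a \<Rightarrow> bool) \<Rightarrow> bool" where
  "simple_graph V E \<longleftrightarrow> finite V \<and> (\<forall>u v. E u v \<longrightarrow> u \<in> V \<and> v \<in> V)
     \<and> (\<forall>u v. E u v \<longrightarrow> E v u) \<and> (\<forall>u. \<not> E u u)"

definition injective_coloring ::
  "'b set \<Rightarrow> ('b \<Rightarrow> 'b \<Rightarrow> bool) \<Rightarrow> ('b \<Rightarrow> nat) \<Rightarrow> nat \<Rightarrow> bool" where
  "injective_coloring W A f k \<longleftrightarrow> (\<forall>v\<in>W. f v \<in> {1..k}) \<and>
     (\<forall>u\<in>W. \<forall>w\<in>W. u \<noteq> w \<and> f u = f w \<longrightarrow> \<not> (\<exists>x\<in>W. A u x \<and> A w x))"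

definition inj_chromatic :: "'b set \<Rightarrow> ('b \<Rightarrow> 'b \<Rightarrow> bool) \<Rightarrow> nat" where
  "inj_chromatic W A = (LEAST k. \<exists>f. injective_coloring W A f k)"

text \<open>Generalized Sierpinski graph S_G^n: vertices are words of length n over V
  (position i of the list = coordinate i+1); adjacency as in the paper, 0-indexed.\<close>
definition sier_verts :: "'a set \<Rightarrow> nat \<Rightarrow> 'a list set" where
  "sier_verts V n = {xs. length xs = n \<and> set xs \<subseteq> V}"

definition sier_adj :: "('a \<Rightarrow> 'a \<Rightarrow> bool) \<Rightarrow> nat \<Rightarrow> 'a list \<Rightarrow> 'a list \<Rightarrow> bool" where
  "sier_adj E n xs ys \<longleftrightarrow> length xs = n \<and> length ys = n \<and>
     (\<exists>d<n. (\<forall>i<d. xs ! i = ys ! i) \<and> E (xs ! d) (ys ! d) \<and>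
        (\<forall>i. d < i \<and> i < n \<longrightarrow> xs ! i = ys ! d \<and> ys ! i = xs ! d))"

end

theory Submission
  imports Defs
begin

text \<open>Colour each word by f of its last two letters. Take distinct words u, w with a common
  neighbour z, reached along edges at levels d1, d2. If both levels lie before the last two
  positions, z determines u = w. If both lie in the last two positions, u and w share their prefix
  and their tails have a common neighbour in S_G^2. In the mixed case one tail is an extreme vertex
  and the other a neighbour of an extreme vertex, which the hypotheses on f separate. Conversely,
  S_G^2 embeds into S_G^n as the words with a fixed prefix, preserving common neighbours.\<close>

definition sier_edge_at ::
  "('a \<Rightarrow> 'a \<Rightarrow> bool) \<Rightarrow> nat \<Rightarrow> nat \<Rightarrow> 'a list \<Rightarrow> 'a list \<Rightarrow> bool" where
  "sier_edge_at E n d xs ys \<longleftrightarrow> length xs = n \<and> length ys = n \<and> d < n \<and>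
     (\<forall>i<d. xs ! i = ys ! i) \<and> E (xs ! d) (ys ! d) \<and>
     (\<forall>i. d < i \<and> i < n \<longrightarrow> xs ! i = ys ! d \<and> ys ! i = xs ! d)"

lemma sier_adj_iff_edge_at: "sier_adj E n xs ys \<longleftrightarrow> (\<exists>d. sier_edge_at E n d xs ys)"
  unfolding sier_adj_def sier_edge_at_def by blast

lemma sier_edge_at_sym: "symp E \<Longrightarrow> sier_edge_at E n d xs ys \<Longrightarrow> sier_edge_at E n d ys xs"
  unfolding sier_edge_at_def by (auto dest: sympD)

lemma sier_edge_at_append:
  assumes "sier_edge_at E m d w w'"
  shows "sier_edge_at E (length p + m) (length p + d) (p @ w) (p @ w')"
  using assms unfolding sier_edge_at_def
  by (auto simp: nth_append less_diff_conv2 less_diff_conv add.commute)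

lemma sier_edge_at_drop:
  assumes e: "sier_edge_at E n d u z" and k: "k \<le> d"
  shows "take k u = take k z \<and> sier_edge_at E (n - k) (d - k) (drop k u) (drop k z)"
proof
  show "take k u = take k z"
    using e k unfolding sier_edge_at_def by (intro nth_equalityI) auto
  have "k + (d - k) = d" using k by simp
  then show "sier_edge_at E (n - k) (d - k) (drop k u) (drop k z)"
    using e k unfolding sier_edge_at_def by (auto simp: less_diff_conv less_diff_conv2 add.commute)
qed

lemma sier_edge_at_drop_below:
  assumes e: "sier_edge_at E n d u z" and k: "d < k"
  shows "drop k u = replicate (n - k) (z ! d) \<and> drop k z = replicate (n - k) (u ! d)"
  using e k unfolding sier_edge_at_def by (auto intro!: nth_equalityI)

lemma sier_edge_at_unique_low:
  assumes irr: "irreflp E"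
    and u: "sier_edge_at E n d1 u z" and w: "sier_edge_at E n d2 w z"
    and d: "d1 < n - 1" "d2 < n - 1"
  shows "u = w"
proof -
  have last_z: "z ! (n - 1) = u ! d1" "z ! (n - 1) = w ! d2"
    using u w d unfolding sier_edge_at_def by auto
  have "d1 = d2"
  proof (rule ccontr)
    assume "d1 \<noteq> d2"
    then consider "d1 < d2" | "d2 < d1" by linarith
    then show False
    proof cases
      case 1
      then have "z ! d2 = w ! d2"
        using u w last_z unfolding sier_edge_at_def by auto
      then show False using w irr unfolding sier_edge_at_def by (auto dest: irreflpD)
    next
      case 2
      then have "z ! d1 = u ! d1"
        using u w last_z unfolding sier_edge_at_def by auto
      then show False using u irr unfolding sier_edge_at_def by (auto dest: irreflpD)
    qed
  qed
  show ?thesis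
  proof (rule nth_equalityI)
    show "length u = length w" using u w unfolding sier_edge_at_def by simp
    fix i assume "i < length u"
    then consider "i < d1" | "i = d1" | "d1 < i \<and> i < n"
      using u unfolding sier_edge_at_def by linarith
    then show "u ! i = w ! i"
      using u w last_z \<open>d1 = d2\<close> unfolding sier_edge_at_def by cases auto
  qed
qed

lemma sier_adj_append:
  "sier_adj E m w w' \<Longrightarrow> sier_adj E (length p + m) (p @ w) (p @ w')"
  unfolding sier_adj_iff_edge_at by (blast intro: sier_edge_at_append)

lemma injective_coloring_prefix:
  assumes c: "injective_coloring (sier_verts V (length p + m)) (sier_adj E (length p + m)) h k"
    and p: "set p \<subseteq> V"
  shows "injective_coloring (sier_verts V m) (sier_adj E m) (\<lambda>w. h (p @ w)) k"
proof -
  have mem: "p @ w \<in> sier_verts V (length p + m)" if "w \<in> sier_verts V m" for w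
    using that p unfolding sier_verts_def by auto
  show ?thesis
    using c mem sier_adj_append unfolding injective_coloring_def
    by (metis same_append_eq)
qed

lemma inj_chromatic_le: "injective_coloring W A f k \<Longrightarrow> inj_chromatic W A \<le> k"
  unfolding inj_chromatic_def by (blast intro: Least_le)

lemma injective_coloring_inj_chromatic:
  "injective_coloring W A f k \<Longrightarrow> \<exists>g. injective_coloring W A g (inj_chromatic W A)"
  unfolding inj_chromatic_def by (rule LeastI_ex) blast

lemma inj_chromatic_sier_mono:
  assumes c: "injective_coloring (sier_verts V n) (sier_adj E n) h k" and m: "1 \<le> m" "m \<le> n"
  shows "inj_chromatic (sier_verts V m) (sier_adj E m) \<le> inj_chromatic (sier_verts V n) (sier_adj E n)"
proof (cases "V = {}")
  case True
  then have "sier_verts V m = {}" using m unfolding sier_verts_def by auto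
  then show ?thesis unfolding inj_chromatic_def injective_coloring_def by simp
next
  case False
  then obtain v where v: "v \<in> V" by blast
  obtain g where g: "injective_coloring (sier_verts V n) (sier_adj E n) g
      (inj_chromatic (sier_verts V n) (sier_adj E n))"
    using injective_coloring_inj_chromatic[OF c] by blast
  have "length (replicate (n - m) v) + m = n" using m by simp
  then have "injective_coloring (sier_verts V m) (sier_adj E m) (\<lambda>w. g (replicate (n - m) v @ w))
      (inj_chromatic (sier_verts V n) (sier_adj E n))"
    using g v by (intro injective_coloring_prefix) auto
  then show ?thesis by (rule inj_chromatic_le)
qed

lemma drop_in_sier_verts: "w \<in> sier_verts V n \<Longrightarrow> drop k w \<in> sier_verts V (n - k)"
  unfolding sier_verts_def by (auto dest: in_set_dropD)

lemma sier_colors_differ_low_high: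
  assumes G: "simple_graph V E"
    and same: "\<forall>u\<in>V. \<forall>v\<in>V. f [u, u] = f [v, v]"
    and nbr: "\<forall>u\<in>V. \<forall>y\<in>sier_verts V 2. sier_adj E 2 [u, u] y \<longrightarrow> f y \<noteq> f [u, u]"
    and u: "sier_edge_at E n d1 u z" "d1 < n - 2"
    and w: "sier_edge_at E n d2 w z" "n - 2 \<le> d2" "w \<in> sier_verts V n"
  shows "f (drop (n - 2) u) \<noteq> f (drop (n - 2) w)"
proof -
  have two: "n - (n - 2) = 2" using u(2) by simp
  have V: "u ! d1 \<in> V" "z ! d1 \<in> V"
    using G u(1) unfolding simple_graph_def sier_edge_at_def by blast+
  have tails: "drop (n - 2) u = [z ! d1, z ! d1]" "drop (n - 2) z = [u ! d1, u ! d1]"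
    using sier_edge_at_drop_below[OF u] two by (simp_all add: numeral_2_eq_2)
  have "symp E" using G unfolding simple_graph_def by (blast intro: sympI)
  then have "sier_edge_at E 2 (d2 - (n - 2)) (drop (n - 2) z) (drop (n - 2) w)"
    using sier_edge_at_drop[OF w(1,2)] two by (auto intro: sier_edge_at_sym)
  then have "sier_adj E 2 [u ! d1, u ! d1] (drop (n - 2) w)"
    unfolding sier_adj_iff_edge_at tails by blast
  then have "f (drop (n - 2) w) \<noteq> f [u ! d1, u ! d1]"
    using nbr V(1) drop_in_sier_verts[OF w(3), of "n - 2"] unfolding two by blast
  moreover have "f (drop (n - 2) u) = f [u ! d1, u ! d1]"
    using same V unfolding tails by blast
  ultimately show ?thesis by simp
qed

lemma injective_coloring_sier_last_two:
  assumes G: "simple_graph V E"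
    and col: "injective_coloring (sier_verts V 2) (sier_adj E 2) f k"
    and same: "\<forall>u\<in>V. \<forall>v\<in>V. f [u, u] = f [v, v]"
    and nbr: "\<forall>u\<in>V. \<forall>y\<in>sier_verts V 2. sier_adj E 2 [u, u] y \<longrightarrow> f y \<noteq> f [u, u]"
    and n: "2 \<le> n"
  shows "injective_coloring (sier_verts V n) (sier_adj E n) (\<lambda>w. f (drop (n - 2) w)) k"
proof -
  have tail: "drop (n - 2) x \<in> sier_verts V 2" if "x \<in> sier_verts V n" for x
    using drop_in_sier_verts[OF that, of "n - 2"] n by simp
  show ?thesis
    unfolding injective_coloring_def
  proof (intro conjI ballI impI notI)
    fix v assume "v \<in> sier_verts V n"
    then show "f (drop (n - 2) v) \<in> {1..k}"
      using col tail unfolding injective_coloring_def by blast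
  next
    fix u w assume u: "u \<in> sier_verts V n" and w: "w \<in> sier_verts V n"
      and uw: "u \<noteq> w \<and> f (drop (n - 2) u) = f (drop (n - 2) w)"
      and "\<exists>x\<in>sier_verts V n. sier_adj E n u x \<and> sier_adj E n w x"
    then obtain z d1 d2 where z: "z \<in> sier_verts V n"
      and e1: "sier_edge_at E n d1 u z" and e2: "sier_edge_at E n d2 w z"
      unfolding sier_adj_iff_edge_at by blast
    consider "d1 < n - 2" "d2 < n - 2" | "d1 < n - 2" "n - 2 \<le> d2"
      | "n - 2 \<le> d1" "d2 < n - 2" | "n - 2 \<le> d1" "n - 2 \<le> d2" by linarith
    then show False
    proof cases
      case 1
      have "irreflp E" using G unfolding simple_graph_def by (blast intro: irreflpI)
      then have "u = w" using sier_edge_at_unique_low[OF _ e1 e2] 1 by simp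
      with uw show False by simp
    next
      case 2
      with sier_colors_differ_low_high[OF G same nbr e1 _ e2 _ w] uw show False by simp
    next
      case 3
      with sier_colors_differ_low_high[OF G same nbr e2 _ e1 _ u] uw show False by simp
    next
      case 4
      have two: "n - (n - 2) = 2" using n by simp
      note h1 = sier_edge_at_drop[OF e1 4(1)] and h2 = sier_edge_at_drop[OF e2 4(2)]
      have "drop (n - 2) u \<noteq> drop (n - 2) w"
        using h1 h2 uw by (metis append_take_drop_id)
      moreover have "sier_adj E 2 (drop (n - 2) u) (drop (n - 2) z)"
        "sier_adj E 2 (drop (n - 2) w) (drop (n - 2) z)"
        using h1 h2 two unfolding sier_adj_iff_edge_at by auto
      ultimately show False
        using col tail[OF u] tail[OF w] tail[OF z] uw unfolding injective_coloring_def by blast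
    qed
  qed
qed

theorem mainTheorem2:
  fixes V :: "'a set" and E :: "'a \<Rightarrow> 'a \<Rightarrow> bool" and f :: "'a list \<Rightarrow> nat"
  assumes G: "simple_graph V E"
    and col: "injective_coloring (sier_verts V 2) (sier_adj E 2) f
                (inj_chromatic (sier_verts V 2) (sier_adj E 2))"
    and same: "\<forall>u\<in>V. \<forall>v\<in>V. f [u, u] = f [v, v]"
    and nbr: "\<forall>u\<in>V. \<forall>y\<in>sier_verts V 2. sier_adj E 2 [u, u] y \<longrightarrow> f y \<noteq> f [u, u]"
  shows "\<forall>n\<ge>2. inj_chromatic (sier_verts V n) (sier_adj E n)
                 = inj_chromatic (sier_verts V 2) (sier_adj E 2)"
proof (intro allI impI)
  fix n :: nat assume n: "2 \<le> n"
  have lift: "injective_coloring (sier_verts V n) (sier_adj E n) (\<lambda>w. f (drop (n - 2) w))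
      (inj_chromatic (sier_verts V 2) (sier_adj E 2))"
    using injective_coloring_sier_last_two[OF G col same nbr n] .
  then have "inj_chromatic (sier_verts V n) (sier_adj E n) \<le> inj_chromatic (sier_verts V 2) (sier_adj E 2)"
    by (rule inj_chromatic_le)
  moreover have "inj_chromatic (sier_verts V 2) (sier_adj E 2) \<le> inj_chromatic (sier_verts V n) (sier_adj E n)"
    using inj_chromatic_sier_mono[OF lift _ n] by simp
  ultimately show "inj_chromatic (sier_verts V n) (sier_adj E n)
      = inj_chromatic (sier_verts V 2) (sier_adj E 2)" by (rule antisym)
qed

end
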